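(* Let $\mathcal{F}$ and $\mathcal{L}$ be classes of simple graphs, where $\mathcal{L}$ is finite and its elements are pairwise non-isomorphic. Let $\alpha\colon\mathcal{L}\to\mathbb{R}\setminus\{0\}$. If for all simple graphs $G$ and $H$, \[ G\equiv_{\mathcal{F}}H \implies \sum_{L\in\mathcal{L}}\alpha_L\hom(L,G)=\sum_{L\in\mathcal{L}}\alpha_L\hom(L,H),\] then $\mathcal{L}\subseteq\mathrm{cl}(\mathcal{F})$.
   Context: All graphs are finite, undirected, without multiple edges; simple means without loops. $\hom(F,G)$ is the number of homomorphisms $F\to G$. $G\equiv_{\mathcal{F}}H$ means $\hom(F,G)=\hom(F,H)$ for all $F\in\mathcal{F}$. $\mathrm{cl}(\mathcal{F})$ is the class of all simple graphs $K$ such that for all simple graphs $G,H$, $G\equiv_{\mathcal{F}}H$ implies $\hom(K,G)=\hom(K,H)$. *)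

theory Defs
  imports Complex_Main "HOL-Library.FuncSet"
begin

text \<open>A graph is a pair (V, E) with vertex set V of natural numbers and edge set E
  of ordered pairs (an undirected edge {u,v} is stored as both (u,v) and (v,u)).
  Every finite graph is isomorphic to one of this form.\<close>
type_synonym graph = "nat set \<times> (nat \<times> nat) set"

definition verts :: "graph \<Rightarrow> nat set" where "verts G = fst G"
definition edges :: "graph \<Rightarrow> (nat \<times> nat) set" where "edges G = snd G"

definition simple_graph :: "graph \<Rightarrow> bool" where
  "simple_graph G \<longleftrightarrow> finite (verts G) \<and> edges G \<subseteq> verts G \<times> verts G
     \<and> (\<forall>u v. (u,v) \<in> edges G \<longrightarrow> (v,u) \<in> edges G)
     \<and> (\<forall>v. (v,v) \<notin> edges G)"

definition homs :: "graph \<Rightarrow> graph \<Rightarrow> (nat \<Rightarrow> nat) set" where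
  "homs F G = {f \<in> verts F \<rightarrow>\<^sub>E verts G.
      \<forall>u v. (u,v) \<in> edges F \<longrightarrow> (f u, f v) \<in> edges G}"

definition hom :: "graph \<Rightarrow> graph \<Rightarrow> nat" where
  "hom F G = card (homs F G)"

definition iso :: "graph \<Rightarrow> graph \<Rightarrow> bool" where
  "iso F G \<longleftrightarrow> (\<exists>f. bij_betw f (verts F) (verts G) \<and>
      (\<forall>u\<in>verts F. \<forall>v\<in>verts F. (u,v) \<in> edges F \<longleftrightarrow> (f u, f v) \<in> edges G))"

definition hom_equiv :: "graph set \<Rightarrow> graph \<Rightarrow> graph \<Rightarrow> bool" where
  "hom_equiv \<F> G H \<longleftrightarrow> (\<forall>F\<in>\<F>. hom F G = hom F H)"

definition cl :: "graph set \<Rightarrow> graph set" where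
  "cl \<F> = {K. simple_graph K \<and> (\<forall>G H. simple_graph G \<longrightarrow> simple_graph H \<longrightarrow>
       hom_equiv \<F> G H \<longrightarrow> hom K G = hom K H)}"

end

theory Submission
  imports Defs "HOL-Library.Nat_Bijection"
begin

text \<open>Call a weight \<open>\<beta>\<close> on \<open>\<L>\<close> admissible (\<open>hom_lincomb_respects\<close>) if
  \<open>\<Sum>\<^sub>L \<beta> L * hom(L, -)\<close> is constant on \<open>\<equiv>\<^sub>\<F>\<close>-classes. Since
  \<open>hom(L, G \<times> K) = hom(L, G) * hom(L, K)\<close> and \<open>G \<equiv>\<^sub>\<F> H\<close> implies
  \<open>G \<times> K \<equiv>\<^sub>\<F> H \<times> K\<close>, admissibility of \<open>\<beta>\<close> passes to \<open>\<beta> L * (hom(L, K) - c)\<close>.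
  By Lovasz's theorem every \<open>M \<noteq> L\<^sub>0\<close> in \<open>\<L>\<close> is separated from \<open>L\<^sub>0\<close> by a graph
  \<open>K\<^sub>M\<close>, so multiplying \<open>\<alpha>\<close> by \<open>\<Prod>\<^sub>M (hom(L, K\<^sub>M) - hom(M, K\<^sub>M))\<close> leaves an admissible
  weight supported on \<open>L\<^sub>0\<close> alone; hence \<open>hom(L\<^sub>0, -)\<close> is constant on \<open>\<equiv>\<^sub>\<F>\<close>-classes.

  Lovasz's theorem follows by inverting \<open>hom(F, G) = \<Sum>\<^bsub>S \<subseteq> V(G)\<^esub> surj(F, G[S])\<close>,
  a triangular system in the number of vertices: graphs \<open>F\<close>, \<open>F'\<close> with the same
  homomorphism counts have the same numbers of vertex-surjective homomorphisms into every
  graph, in particular into each other, and mutual vertex-surjective homomorphisms between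
  finite simple graphs are isomorphisms.\<close>

lemma simple_graph_edges_subset: "simple_graph G \<Longrightarrow> edges G \<subseteq> verts G \<times> verts G"
  by (simp add: simple_graph_def)

lemma simple_graph_finite_verts: "simple_graph G \<Longrightarrow> finite (verts G)"
  by (simp add: simple_graph_def)

lemma simple_graph_finite_edges: "simple_graph G \<Longrightarrow> finite (edges G)"
  using finite_subset[OF simple_graph_edges_subset] simple_graph_finite_verts by blast

lemma finite_homs: "finite (verts F) \<Longrightarrow> finite (verts G) \<Longrightarrow> finite (homs F G)"
  unfolding homs_def by (rule finite_subset[OF _ finite_PiE[of "verts F" "\<lambda>_. verts G"]]) auto

definition induced_subgraph :: "graph \<Rightarrow> nat set \<Rightarrow> graph" where
  "induced_subgraph G S = (S, edges G \<inter> S \<times> S)"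

lemma verts_induced_subgraph [simp]: "verts (induced_subgraph G S) = S"
  by (simp add: induced_subgraph_def verts_def)

lemma edges_induced_subgraph [simp]: "edges (induced_subgraph G S) = edges G \<inter> S \<times> S"
  by (simp add: induced_subgraph_def edges_def)

lemma simple_graph_induced_subgraph:
  assumes "simple_graph G" "S \<subseteq> verts G"
  shows "simple_graph (induced_subgraph G S)"
  using assms rev_finite_subset[OF simple_graph_finite_verts[OF assms(1)] assms(2)]
  unfolding simple_graph_def by auto

lemma induced_subgraph_verts: "simple_graph G \<Longrightarrow> induced_subgraph G (verts G) = G"
  unfolding simple_graph_def induced_subgraph_def verts_def edges_def by (cases G) auto

definition surj_homs :: "graph \<Rightarrow> graph \<Rightarrow> (nat \<Rightarrow> nat) set" where
  "surj_homs F G = {f \<in> homs F G. f ` verts F = verts G}"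

definition surj_hom :: "graph \<Rightarrow> graph \<Rightarrow> nat" where
  "surj_hom F G = card (surj_homs F G)"

lemma finite_surj_homs: "finite (verts F) \<Longrightarrow> finite (verts G) \<Longrightarrow> finite (surj_homs F G)"
  unfolding surj_homs_def using finite_homs by simp

lemma restrict_id_in_surj_homs:
  "edges F \<subseteq> verts F \<times> verts F \<Longrightarrow> (\<lambda>v\<in>verts F. v) \<in> surj_homs F F"
  unfolding surj_homs_def homs_def by auto

lemma homs_eq_UN_surj_homs:
  assumes "edges F \<subseteq> verts F \<times> verts F"
  shows "homs F G = (\<Union>S\<in>Pow (verts G). surj_homs F (induced_subgraph G S))"
proof (intro equalityI subsetI)
  fix f assume f: "f \<in> homs F G"
  then have "f \<in> surj_homs F (induced_subgraph G (f ` verts F))"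
    using assms unfolding surj_homs_def homs_def by auto
  moreover have "f ` verts F \<in> Pow (verts G)"
    using f by (auto simp: homs_def)
  ultimately show "f \<in> (\<Union>S\<in>Pow (verts G). surj_homs F (induced_subgraph G S))"
    by blast
qed (auto simp: surj_homs_def homs_def PiE_iff)

lemma hom_eq_sum_surj_hom:
  assumes "simple_graph F" and "finite (verts G)"
  shows "hom F G = (\<Sum>S\<in>Pow (verts G). surj_hom F (induced_subgraph G S))"
  unfolding hom_def surj_hom_def homs_eq_UN_surj_homs[OF simple_graph_edges_subset[OF assms(1)]]
proof (rule card_UN_disjoint)
  show "\<forall>S\<in>Pow (verts G). finite (surj_homs F (induced_subgraph G S))"
  proof
    fix S assume "S \<in> Pow (verts G)"
    then have "finite S"
      using finite_subset assms(2) by auto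
    then show "finite (surj_homs F (induced_subgraph G S))"
      using simple_graph_finite_verts[OF assms(1)] by (simp add: finite_surj_homs)
  qed
qed (use assms in \<open>auto simp: surj_homs_def\<close>)

lemma surj_hom_eq_if_hom_eq:
  assumes "simple_graph F" "simple_graph F'"
    and hom_eq: "\<And>K. simple_graph K \<Longrightarrow> hom F K = hom F' K"
    and "simple_graph G"
  shows "surj_hom F G = surj_hom F' G"
  using \<open>simple_graph G\<close>
proof (induction "card (verts G)" arbitrary: G rule: less_induct)
  case less
  let ?P = "Pow (verts G) - {verts G}"
  have fin: "finite (verts G)"
    using less.prems by (rule simple_graph_finite_verts)
  have hom_split: "hom X G = surj_hom X G + (\<Sum>S\<in>?P. surj_hom X (induced_subgraph G S))"
    if "simple_graph X" for X
  proof -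
    have "hom X G = (\<Sum>S\<in>Pow (verts G). surj_hom X (induced_subgraph G S))"
      using that fin by (rule hom_eq_sum_surj_hom)
    also have "\<dots> = surj_hom X (induced_subgraph G (verts G))
        + (\<Sum>S\<in>?P. surj_hom X (induced_subgraph G S))"
      using fin by (intro sum.remove) auto
    finally show ?thesis
      by (simp add: induced_subgraph_verts[OF less.prems])
  qed
  have "surj_hom F (induced_subgraph G S) = surj_hom F' (induced_subgraph G S)" if "S \<in> ?P" for S
  proof (rule less.hyps)
    show "card (verts (induced_subgraph G S)) < card (verts G)"
      using that fin by (auto intro: psubset_card_mono)
    show "simple_graph (induced_subgraph G S)"
      using that less.prems by (auto intro: simple_graph_induced_subgraph)
  qed
  then show ?case
    using hom_split[OF \<open>simple_graph F\<close>] hom_split[OF \<open>simple_graph F'\<close>] hom_eq[OF less.prems]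
    by simp
qed

lemma bij_betw_if_surj_homs:
  assumes "finite (verts F)" "finite (verts F')"
    and f: "f \<in> surj_homs F' F" and g: "g \<in> surj_homs F F'"
  shows "bij_betw f (verts F') (verts F)"
proof -
  have f_onto: "f ` verts F' = verts F" and g_onto: "g ` verts F = verts F'"
    using f g by (simp_all add: surj_homs_def)
  have "card (verts F) \<le> card (verts F')"
    using card_image_le[OF assms(2), of f] by (simp add: f_onto)
  moreover have "card (verts F') \<le> card (verts F)"
    using card_image_le[OF assms(1), of g] by (simp add: g_onto)
  ultimately have "inj_on f (verts F')"
    using assms(2) by (intro eq_card_imp_inj_on) (simp_all add: f_onto)
  from this f_onto show ?thesis
    by (rule bij_betw_imageI)
qed

lemma card_edges_le_if_inj_hom:
  assumes "f \<in> homs F' F" "inj_on f (verts F')"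
    and "edges F' \<subseteq> verts F' \<times> verts F'" "finite (edges F)"
  shows "card (edges F') \<le> card (edges F)"
proof (rule card_inj_on_le)
  show "inj_on (map_prod f f) (edges F')"
    using inj_on_subset[OF map_prod_inj_on[OF assms(2) assms(2)] assms(3)] .
  show "map_prod f f ` edges F' \<subseteq> edges F"
    using assms(1) by (auto simp: homs_def)
qed fact

lemma iso_if_bij_hom:
  assumes f: "f \<in> homs F' F" "bij_betw f (verts F') (verts F)"
    and edges_F': "edges F' \<subseteq> verts F' \<times> verts F'"
    and "finite (edges F)" "card (edges F) \<le> card (edges F')"
  shows "iso F' F"
proof -
  have inj: "inj_on f (verts F')"
    using f(2) by (rule bij_betw_imp_inj_on)
  have inj_edges: "inj_on (map_prod f f) (edges F')"
    using inj_on_subset[OF map_prod_inj_on[OF inj inj] edges_F'] .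
  have image_sub: "map_prod f f ` edges F' \<subseteq> edges F"
    using f(1) by (auto simp: homs_def)
  have image_eq: "map_prod f f ` edges F' = edges F"
    using assms(4) image_sub by (rule card_seteq) (simp add: card_image[OF inj_edges] assms(5))
  have "(u, v) \<in> edges F' \<longleftrightarrow> (f u, f v) \<in> edges F" if uv: "u \<in> verts F'" "v \<in> verts F'" for u v
  proof
    assume "(f u, f v) \<in> edges F"
    then obtain a b where ab: "(a, b) \<in> edges F'" "(f a, f b) = (f u, f v)"
      unfolding image_eq[symmetric] by auto
    moreover have "a \<in> verts F'" "b \<in> verts F'"
      using ab(1) edges_F' by auto
    ultimately have "a = u" "b = v"
      using inj uv by (simp_all add: inj_on_eq_iff)
    with ab(1) show "(u, v) \<in> edges F'"
      by simp
  qed (use image_sub in auto)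
  with f(2) show ?thesis
    unfolding iso_def by blast
qed

lemma iso_if_surj_homs:
  assumes "simple_graph F" "simple_graph F'"
    and f: "f \<in> surj_homs F' F" and g: "g \<in> surj_homs F F'"
  shows "iso F' F"
proof -
  note fin = simple_graph_finite_verts[OF assms(1)] simple_graph_finite_verts[OF assms(2)]
  have bij_f: "bij_betw f (verts F') (verts F)"
    using fin f g by (rule bij_betw_if_surj_homs)
  have bij_g: "bij_betw g (verts F) (verts F')"
    using fin(2,1) g f by (rule bij_betw_if_surj_homs)
  have f_hom: "f \<in> homs F' F" and g_hom: "g \<in> homs F F'"
    using f g by (simp_all add: surj_homs_def)
  have "card (edges F) \<le> card (edges F')"
    using g_hom bij_betw_imp_inj_on[OF bij_g] simple_graph_edges_subset[OF assms(1)]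
      simple_graph_finite_edges[OF assms(2)]
    by (rule card_edges_le_if_inj_hom)
  with f_hom bij_f simple_graph_edges_subset[OF assms(2)] simple_graph_finite_edges[OF assms(1)]
  show ?thesis
    by (rule iso_if_bij_hom)
qed

lemma surj_hom_self_pos:
  assumes "simple_graph F"
  shows "surj_hom F F > 0"
proof -
  have "finite (surj_homs F F)"
    using assms by (simp add: finite_surj_homs simple_graph_finite_verts)
  moreover have "(\<lambda>v\<in>verts F. v) \<in> surj_homs F F"
    using assms by (simp add: restrict_id_in_surj_homs simple_graph_edges_subset)
  ultimately show ?thesis
    unfolding surj_hom_def by (auto simp: card_gt_0_iff)
qed

theorem iso_if_hom_eq:
  assumes "simple_graph F" "simple_graph F'"
    and hom_eq: "\<And>K. simple_graph K \<Longrightarrow> hom F K = hom F' K"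
  shows "iso F' F"
proof -
  have "surj_hom F' F > 0"
    using surj_hom_self_pos[OF assms(1)] surj_hom_eq_if_hom_eq[OF assms(1,2) hom_eq assms(1)] by simp
  moreover have "surj_hom F F' > 0"
    using surj_hom_self_pos[OF assms(2)] surj_hom_eq_if_hom_eq[OF assms(1,2) hom_eq assms(2)] by simp
  ultimately have "surj_homs F' F \<noteq> {}" "surj_homs F F' \<noteq> {}"
    unfolding surj_hom_def by auto
  then obtain f g where "f \<in> surj_homs F' F" "g \<in> surj_homs F F'"
    by blast
  with assms(1,2) show ?thesis
    by (rule iso_if_surj_homs)
qed

lemma ex_hom_neq_if_not_iso:
  assumes "simple_graph F" "simple_graph F'" "\<not> iso F' F"
  shows "\<exists>K. simple_graph K \<and> hom F' K \<noteq> hom F K"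
proof (rule ccontr)
  assume "\<nexists>K. simple_graph K \<and> hom F' K \<noteq> hom F K"
  then have "iso F' F"
    using assms(1,2) by (intro iso_if_hom_eq) auto
  with assms(3) show False ..
qed

definition graph_product :: "graph \<Rightarrow> graph \<Rightarrow> graph" where
  "graph_product G K = (prod_encode ` (verts G \<times> verts K),
     {(prod_encode (a, b), prod_encode (c, d)) | a b c d. (a, c) \<in> edges G \<and> (b, d) \<in> edges K})"

lemma verts_graph_product: "verts (graph_product G K) = prod_encode ` (verts G \<times> verts K)"
  by (simp add: graph_product_def verts_def)

lemma edges_graph_product: "edges (graph_product G K) =
    {(prod_encode (a, b), prod_encode (c, d)) | a b c d. (a, c) \<in> edges G \<and> (b, d) \<in> edges K}"
  by (simp add: graph_product_def edges_def)

lemma simple_graph_graph_product: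
  "simple_graph G \<Longrightarrow> simple_graph K \<Longrightarrow> simple_graph (graph_product G K)"
  unfolding simple_graph_def verts_graph_product edges_graph_product
  by (auto dest: inj_onD[OF inj_prod_encode, simplified])

lemma inj_on_pair_homs:
  "inj_on (\<lambda>(f, g). \<lambda>v\<in>verts F. prod_encode (f v, g v)) (homs F G \<times> homs F K)"
proof (rule inj_onI, clarsimp)
  fix f g f' g'
  assume homs: "f \<in> homs F G" "g \<in> homs F K" "f' \<in> homs F G" "g' \<in> homs F K"
    and eq: "(\<lambda>v\<in>verts F. prod_encode (f v, g v)) = (\<lambda>v\<in>verts F. prod_encode (f' v, g' v))"
  have "f v = f' v \<and> g v = g' v" for v
  proof (cases "v \<in> verts F")
    case True
    then show ?thesis
      using fun_cong[OF eq, of v] by simp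
  next
    case False
    then show ?thesis
      using homs by (simp add: homs_def PiE_def extensional_def)
  qed
  then show "f = f' \<and> g = g'"
    by auto
qed

lemma bij_betw_pair_homs:
  assumes edges_F: "edges F \<subseteq> verts F \<times> verts F"
  shows "bij_betw (\<lambda>(f, g). \<lambda>v\<in>verts F. prod_encode (f v, g v))
           (homs F G \<times> homs F K) (homs F (graph_product G K))"
    (is "bij_betw ?pair _ _")
proof (rule bij_betw_imageI[OF inj_on_pair_homs])
  show "?pair ` (homs F G \<times> homs F K) = homs F (graph_product G K)"
  proof (intro equalityI subsetI)
    fix h assume "h \<in> ?pair ` (homs F G \<times> homs F K)"
    then show "h \<in> homs F (graph_product G K)"
      using edges_F by (fastforce simp: homs_def verts_graph_product edges_graph_product)
  next
    fix h assume h: "h \<in> homs F (graph_product G K)"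
    define f where "f = (\<lambda>v\<in>verts F. fst (prod_decode (h v)))"
    define g where "g = (\<lambda>v\<in>verts F. snd (prod_decode (h v)))"
    have "f \<in> homs F G" "g \<in> homs F K"
      using h edges_F
      by (force simp: f_def g_def homs_def verts_graph_product edges_graph_product)+
    moreover have "h = ?pair (f, g)"
      using h by (auto simp: f_def g_def homs_def PiE_iff extensional_def)
    ultimately show "h \<in> ?pair ` (homs F G \<times> homs F K)"
      by blast
  qed
qed

lemma hom_graph_product:
  "simple_graph F \<Longrightarrow> hom F (graph_product G K) = hom F G * hom F K"
  unfolding hom_def
  by (simp add: bij_betw_same_card[OF bij_betw_pair_homs, symmetric] card_cartesian_product
      simple_graph_edges_subset)

definition hom_lincomb_respects :: "graph set \<Rightarrow> graph set \<Rightarrow> (graph \<Rightarrow> real) \<Rightarrow> bool" where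
  "hom_lincomb_respects \<F> \<L> \<beta> \<longleftrightarrow>
     (\<forall>G H. simple_graph G \<longrightarrow> simple_graph H \<longrightarrow> hom_equiv \<F> G H \<longrightarrow>
        (\<Sum>L\<in>\<L>. \<beta> L * real (hom L G)) = (\<Sum>L\<in>\<L>. \<beta> L * real (hom L H)))"

lemma hom_lincomb_respectsD:
  "hom_lincomb_respects \<F> \<L> \<beta> \<Longrightarrow> simple_graph G \<Longrightarrow> simple_graph H \<Longrightarrow> hom_equiv \<F> G H
    \<Longrightarrow> (\<Sum>L\<in>\<L>. \<beta> L * real (hom L G)) = (\<Sum>L\<in>\<L>. \<beta> L * real (hom L H))"
  unfolding hom_lincomb_respects_def by blast

lemma hom_equiv_graph_product:
  "\<forall>F\<in>\<F>. simple_graph F \<Longrightarrow> hom_equiv \<F> G H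
    \<Longrightarrow> hom_equiv \<F> (graph_product G K) (graph_product H K)"
  by (simp add: hom_equiv_def hom_graph_product)

lemma hom_lincomb_respects_diff:
  assumes "hom_lincomb_respects \<F> \<L> \<beta>" "hom_lincomb_respects \<F> \<L> \<gamma>"
  shows "hom_lincomb_respects \<F> \<L> (\<lambda>L. \<beta> L - c * \<gamma> L)"
  using assms
  by (simp add: hom_lincomb_respects_def left_diff_distrib sum_subtractf mult.assoc
      sum_distrib_left[symmetric])

lemma hom_lincomb_respects_mult_hom:
  assumes \<F>: "\<forall>F\<in>\<F>. simple_graph F" and \<L>: "\<forall>L\<in>\<L>. simple_graph L"
    and K: "simple_graph K" and \<beta>: "hom_lincomb_respects \<F> \<L> \<beta>"
  shows "hom_lincomb_respects \<F> \<L> (\<lambda>L. \<beta> L * real (hom L K))"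
  unfolding hom_lincomb_respects_def
proof (intro allI impI)
  fix G H assume G: "simple_graph G" and H: "simple_graph H" and GH: "hom_equiv \<F> G H"
  have product: "(\<Sum>L\<in>\<L>. \<beta> L * real (hom L K) * real (hom L X))
      = (\<Sum>L\<in>\<L>. \<beta> L * real (hom L (graph_product X K)))" for X
    using \<L> by (intro sum.cong) (simp_all add: hom_graph_product)
  show "(\<Sum>L\<in>\<L>. \<beta> L * real (hom L K) * real (hom L G))
      = (\<Sum>L\<in>\<L>. \<beta> L * real (hom L K) * real (hom L H))"
    unfolding product
    using \<beta> simple_graph_graph_product[OF G K] simple_graph_graph_product[OF H K]
      hom_equiv_graph_product[OF \<F> GH]
    by (rule hom_lincomb_respectsD)
qed

lemma hom_lincomb_respects_mult_prod:
  assumes \<F>: "\<forall>F\<in>\<F>. simple_graph F" and \<L>: "\<forall>L\<in>\<L>. simple_graph L"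
    and "finite T" and K: "\<forall>M\<in>T. simple_graph (K M)"
    and \<beta>: "hom_lincomb_respects \<F> \<L> \<beta>"
  shows "hom_lincomb_respects \<F> \<L> (\<lambda>L. \<beta> L * (\<Prod>M\<in>T. real (hom L (K M)) - c M))"
  using \<open>finite T\<close> K
proof (induction T rule: finite_induct)
  case empty
  then show ?case
    using \<beta> by simp
next
  case (insert M T)
  let ?\<gamma> = "\<lambda>L. \<beta> L * (\<Prod>M\<in>T. real (hom L (K M)) - c M)"
  have "hom_lincomb_respects \<F> \<L> (\<lambda>L. ?\<gamma> L * real (hom L (K M)) - c M * ?\<gamma> L)"
    using insert \<F> \<L> by (intro hom_lincomb_respects_diff hom_lincomb_respects_mult_hom) auto
  then show ?case
    using insert(1,2) by (simp add: algebra_simps)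
qed

lemma in_cl_if_hom_lincomb_respects_single:
  assumes "hom_lincomb_respects \<F> \<L> \<beta>" "finite \<L>" "L\<^sub>0 \<in> \<L>" "simple_graph L\<^sub>0"
    and "\<beta> L\<^sub>0 \<noteq> 0" "\<forall>L\<in>\<L> - {L\<^sub>0}. \<beta> L = 0"
  shows "L\<^sub>0 \<in> cl \<F>"
proof -
  have single: "(\<Sum>L\<in>\<L>. \<beta> L * real (hom L X)) = \<beta> L\<^sub>0 * real (hom L\<^sub>0 X)" for X
    using assms(2,3,6) by (simp add: sum.remove)
  show ?thesis
    using hom_lincomb_respectsD[OF assms(1)] assms(4,5)
    unfolding cl_def single by simp
qed

theorem lemma6:
  fixes \<F> \<L> :: "graph set" and \<alpha> :: "graph \<Rightarrow> real"
  assumes "\<forall>F\<in>\<F>. simple_graph F"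
    and "\<forall>L\<in>\<L>. simple_graph L"
    and "finite \<L>"
    and "\<forall>L1\<in>\<L>. \<forall>L2\<in>\<L>. L1 \<noteq> L2 \<longrightarrow> \<not> iso L1 L2"
    and "\<forall>L\<in>\<L>. \<alpha> L \<noteq> 0"
    and "\<forall>G H. simple_graph G \<longrightarrow> simple_graph H \<longrightarrow> hom_equiv \<F> G H \<longrightarrow>
           (\<Sum>L\<in>\<L>. \<alpha> L * real (hom L G)) = (\<Sum>L\<in>\<L>. \<alpha> L * real (hom L H))"
  shows "\<L> \<subseteq> cl \<F>"
proof
  fix L\<^sub>0 assume L\<^sub>0: "L\<^sub>0 \<in> \<L>"
  have "\<exists>K. simple_graph K \<and> hom L\<^sub>0 K \<noteq> hom M K" if "M \<in> \<L> - {L\<^sub>0}" for M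
    using that L\<^sub>0 assms(2) assms(4)[rule_format, of L\<^sub>0 M] by (intro ex_hom_neq_if_not_iso) auto
  then obtain K where K: "\<And>M. M \<in> \<L> - {L\<^sub>0} \<Longrightarrow> simple_graph (K M)"
    and separates: "\<And>M. M \<in> \<L> - {L\<^sub>0} \<Longrightarrow> hom L\<^sub>0 (K M) \<noteq> hom M (K M)"
    by metis
  define \<beta> where "\<beta> L = \<alpha> L * (\<Prod>M\<in>\<L> - {L\<^sub>0}. real (hom L (K M)) - real (hom M (K M)))" for L
  have \<alpha>: "hom_lincomb_respects \<F> \<L> \<alpha>"
    using assms(6) unfolding hom_lincomb_respects_def .
  have "hom_lincomb_respects \<F> \<L> \<beta>"
    unfolding \<beta>_def
    by (rule hom_lincomb_respects_mult_prod[OF assms(1,2) _ _ \<alpha>]) (use assms(3) K in auto)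
  moreover have "\<beta> L\<^sub>0 \<noteq> 0"
    using separates L\<^sub>0 assms(3,5) by (simp add: \<beta>_def prod_zero_iff)
  moreover have "\<beta> L = 0" if "L \<in> \<L> - {L\<^sub>0}" for L
    unfolding \<beta>_def using assms(3) that by (auto simp: prod_zero_iff intro!: bexI[of _ L])
  ultimately show "L\<^sub>0 \<in> cl \<F>"
    using assms(2,3) L\<^sub>0 by (intro in_cl_if_hom_lincomb_respects_single) auto
qed

end
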